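(* Let $G$ be a group and $s,t\in G$ with $s\neq t$. Then $\Phi(\langle s,t\rangle,\{s,t\})$ is complete bipartite (every vertex of $V_s$ is adjacent to every vertex of $V_t$) if and only if for every $x\in\langle s,t\rangle$ there exist $m,n\in\mathbb{Z}$ with $x=s^mt^n$.
   Context: For a group $K$ and $s\ne t$ in $K$, $\Phi(K,\{s,t\})$ is the multigraph with vertex set $V_s\cup V_t$, where $V_s=\{\langle s\rangle x : x\in K\}$ and $V_t=\{\langle t\rangle y: y\in K\}$ are the sets of right cosets, and with one edge labeled $g$ between $\langle s\rangle x$ and $\langle t\rangle y$ for each $g\in\langle s\rangle x\cap\langle t\rangle y$, and no other edges. *)

theory Defs
  imports "HOL-Algebra.Algebra"
begin

text \<open>The multigraph Phi(K,{s,t}): vertices are right cosets of the cyclic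
subgroups generated by s and t inside K; one edge labelled g between
A in V_s and B in V_t for each g in the intersection of A and B.\<close>

definition Phi_Vs :: "('a, 'b) monoid_scheme \<Rightarrow> 'a set \<Rightarrow> 'a \<Rightarrow> 'a set set" where
  "Phi_Vs G K s = {generate G {s} #>\<^bsub>G\<^esub> x | x. x \<in> K}"

definition Phi_edges :: "('a, 'b) monoid_scheme \<Rightarrow> 'a set \<Rightarrow> 'a \<Rightarrow> 'a \<Rightarrow> ('a set \<times> 'a set \<times> 'a) set" where
  "Phi_edges G K s t = {(A, B, g). A \<in> Phi_Vs G K s \<and> B \<in> Phi_Vs G K t \<and> g \<in> A \<inter> B}"

definition Phi_complete_bipartite :: "('a, 'b) monoid_scheme \<Rightarrow> 'a set \<Rightarrow> 'a \<Rightarrow> 'a \<Rightarrow> bool" where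
  "Phi_complete_bipartite G K s t \<longleftrightarrow>
     (\<forall>A \<in> Phi_Vs G K s. \<forall>B \<in> Phi_Vs G K t. \<exists>g. (A, B, g) \<in> Phi_edges G K s t)"

end

theory Submission
  imports Defs
begin

text \<open>Two right cosets \<open>H x\<close> and \<open>L y\<close> meet exactly when \<open>x y\<inverse> \<in> H L\<close>. Hence all
  cosets \<open>\<langle>s\<rangle> x\<close> and \<open>\<langle>t\<rangle> y\<close> with \<open>x, y \<in> K\<close> meet iff \<open>K \<subseteq> \<langle>s\<rangle> \<langle>t\<rangle>\<close>,
  i.e. iff every element of \<open>K\<close> has the form \<open>s\<^sup>m t\<^sup>n\<close>.\<close>

lemma (in group) r_cosets_meet_iff_set_mult:
  assumes "subgroup H G" "subgroup L G" "x \<in> carrier G" "y \<in> carrier G"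
  shows "(H #> x) \<inter> (L #> y) \<noteq> {} \<longleftrightarrow> x \<otimes> inv y \<in> H <#> L"
proof
  assume "(H #> x) \<inter> (L #> y) \<noteq> {}"
  then obtain h l where hl: "h \<in> H" "l \<in> L" "h \<otimes> x = l \<otimes> y"
    unfolding r_coset_def by blast
  have carr: "h \<in> carrier G" "l \<in> carrier G"
    using hl assms subgroup.subset by blast+
  have "x \<otimes> inv y = inv h \<otimes> l"
    using hl(3) carr assms(3,4)
    by (metis inv_solve_left inv_solve_right m_assoc m_closed inv_closed)
  moreover have "inv h \<in> H" using hl(1) assms(1) by (simp add: subgroup.m_inv_closed)
  ultimately show "x \<otimes> inv y \<in> H <#> L" using hl(2) unfolding set_mult_def by blast
next
  assume "x \<otimes> inv y \<in> H <#> L"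
  then obtain h l where hl: "h \<in> H" "l \<in> L" "x \<otimes> inv y = h \<otimes> l"
    unfolding set_mult_def by blast
  have carr: "h \<in> carrier G" "l \<in> carrier G"
    using hl assms subgroup.subset by blast+
  have "inv h \<otimes> x = l \<otimes> y"
    using hl(3) carr assms(3,4)
    by (metis inv_solve_left inv_solve_right m_assoc m_closed inv_closed)
  moreover have "inv h \<in> H" using hl(1) assms(1) by (simp add: subgroup.m_inv_closed)
  ultimately show "(H #> x) \<inter> (L #> y) \<noteq> {}"
    using hl(2) unfolding r_coset_def by blast
qed

lemma (in group) r_cosets_pairwise_meet_iff_subset_set_mult:
  assumes "subgroup H G" "subgroup L G" "subgroup K G"
  shows "(\<forall>x\<in>K. \<forall>y\<in>K. (H #> x) \<inter> (L #> y) \<noteq> {}) \<longleftrightarrow> K \<subseteq> H <#> L"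
proof -
  have K: "x \<in> K \<Longrightarrow> x \<in> carrier G" for x using assms(3) subgroup.subset by blast
  have "(\<forall>x\<in>K. \<forall>y\<in>K. x \<otimes> inv y \<in> H <#> L) \<longleftrightarrow> K \<subseteq> H <#> L"
  proof
    assume "\<forall>x\<in>K. \<forall>y\<in>K. x \<otimes> inv y \<in> H <#> L"
    then show "K \<subseteq> H <#> L"
      using subgroup.one_closed[OF assms(3)] K by fastforce
  next
    assume "K \<subseteq> H <#> L"
    then show "\<forall>x\<in>K. \<forall>y\<in>K. x \<otimes> inv y \<in> H <#> L"
      by (meson assms(3) subgroup.m_closed subgroup.m_inv_closed subsetD)
  qed
  then show ?thesis
    using r_cosets_meet_iff_set_mult[OF assms(1,2)] K by simp
qed

lemma (in group) Phi_complete_bipartite_iff_subset_set_mult: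
  assumes "s \<in> carrier G" "t \<in> carrier G" "subgroup K G"
  shows "Phi_complete_bipartite G K s t \<longleftrightarrow> K \<subseteq> generate G {s} <#> generate G {t}"
proof -
  have "Phi_complete_bipartite G K s t \<longleftrightarrow>
        (\<forall>x\<in>K. \<forall>y\<in>K. (generate G {s} #> x) \<inter> (generate G {t} #> y) \<noteq> {})"
    unfolding Phi_complete_bipartite_def Phi_edges_def Phi_Vs_def by blast
  also have "\<dots> \<longleftrightarrow> K \<subseteq> generate G {s} <#> generate G {t}"
    using assms by (simp add: r_cosets_pairwise_meet_iff_subset_set_mult generate_is_subgroup)
  finally show ?thesis .
qed

lemma (in group) set_mult_generate_singletons:
  assumes "s \<in> carrier G" "t \<in> carrier G"
  shows "generate G {s} <#> generate G {t} = {s [^] (m::int) \<otimes> t [^] (n::int) | m n. True}"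
  using assms by (auto simp: generate_pow set_mult_def)

theorem proposition4:
  fixes G (structure) and s t :: 'a
  assumes "group G" and "s \<in> carrier G" and "t \<in> carrier G" and "s \<noteq> t"
  shows "Phi_complete_bipartite G (generate G {s, t}) s t \<longleftrightarrow>
         (\<forall>x \<in> generate G {s, t}. \<exists>(m::int) (n::int). x = s [^] m \<otimes> t [^] n)"
proof -
  interpret group G by fact
  have "subgroup (generate G {s, t}) G"
    using assms(2,3) by (simp add: generate_is_subgroup)
  then show ?thesis
    using assms(2,3)
    by (auto simp: Phi_complete_bipartite_iff_subset_set_mult set_mult_generate_singletons)
qed

end
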